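(* Let $\mathfrak A,\mathfrak B$ be $L$-algebras and $H:\mathfrak A\to\mathfrak B$ an isomorphism. Then for all $a,b,c,d\in A$, $$a:b::_{\mathfrak A}c:d\iff Ha:Hb::_{\mathfrak B}Hc:Hd,$$ i.e. $H$ is a proportional homomorphism.
   Context: $L$ is a language of algebras (constants are $0$-ary function symbols), $X$ a denumerable set of variables, $T_{L,X}$ the $L$-terms, $X(s)$ the variables of $s$, $s^{\mathfrak A}$ the induced term function. A justification is a pair $s\to t$ of terms with $X(t)\subseteq X(s)$. $\uparrow_{\mathfrak A}(a\to b)$ is the set of justifications $s\to t$ with $a=s^{\mathfrak A}(\mathbf o)$, $b=t^{\mathfrak A}(\mathbf o)$ for some tuple $\mathbf o$ over $A$; $\uparrow_{(\mathfrak A,\mathfrak B)}(a\to b:\!\cdot\,c\to d):=\uparrow_{\mathfrak A}(a\to b)\cap\uparrow_{\mathfrak B}(c\to d)$. A justification is trivial in $(\mathfrak A,\mathfrak B)$ if it lies in $\uparrow_{(\mathfrak A,\mathfrak B)}(a'\to b':\!\cdot\,c'\to d')$ for all $a',b'\in A,c',d'\in B$. The arrow proportion $a\to b:\!\cdot\,c\to d$ holds in $(\mathfrak A,\mathfrak B)$ iff either (i) all justifications in $\uparrow_{\mathfrak A}(a\to b)\cup\uparrow_{\mathfrak B}(c\to d)$ are trivial, or (ii) $J_d:=\uparrow_{(\mathfrak A,\mathfrak B)}(a\to b:\!\cdot\,c\to d)$ contains a non-trivial justification and for every $d'\in B$, $J_d\subseteq J_{d'}$ implies that $J_{d'}$ contains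 a non-trivial justification and $J_{d'}\subseteq J_d$ (inclusions ignoring trivial justifications). Then $a:b::_{(\mathfrak A,\mathfrak B)}c:d$ iff $a\to b:\!\cdot\,c\to d$ and $b\to a:\!\cdot\,d\to c$ hold in $(\mathfrak A,\mathfrak B)$ and $c\to d:\!\cdot\,a\to b$ and $d\to c:\!\cdot\,b\to a$ hold in $(\mathfrak B,\mathfrak A)$. We write $::_{\mathfrak A}$ for $::_{(\mathfrak A,\mathfrak A)}$. *)

theory Defs
  imports Main
begin

text \<open>A language L is given by a type 'f of function symbols with an arity map
  ar :: 'f => nat (constants have arity 0). Variables are natural numbers (a denumerable set X).\<close>

datatype ('f, 'v) trm = Var 'v | Fun 'f "('f, 'v) trm list"

type_synonym 'f lterm = "('f, nat) trm"

fun wf_term :: "('f \<Rightarrow> nat) \<Rightarrow> ('f, 'v) trm \<Rightarrow> bool" where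
  "wf_term ar (Var x) = True"
| "wf_term ar (Fun f ts) = (length ts = ar f \<and> (\<forall>t\<in>set ts. wf_term ar t))"

primrec vars :: "('f, 'v) trm \<Rightarrow> 'v set" where
  "vars (Var x) = {x}"
| "vars (Fun f ts) = \<Union> (set (map vars ts))"

primrec eval :: "('f \<Rightarrow> 'a list \<Rightarrow> 'a) \<Rightarrow> ('v \<Rightarrow> 'a) \<Rightarrow> ('f, 'v) trm \<Rightarrow> 'a" where
  "eval I \<sigma> (Var x) = \<sigma> x"
| "eval I \<sigma> (Fun f ts) = I f (map (eval I \<sigma>) ts)"

definition algebra :: "('f \<Rightarrow> nat) \<Rightarrow> 'a set \<Rightarrow> ('f \<Rightarrow> 'a list \<Rightarrow> 'a) \<Rightarrow> bool" where
  "algebra ar A I \<longleftrightarrow> (\<forall>f xs. length xs = ar f \<and> set xs \<subseteq> A \<longrightarrow> I f xs \<in> A)"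

definition isomorphism :: "('f \<Rightarrow> nat) \<Rightarrow> 'a set \<Rightarrow> ('f \<Rightarrow> 'a list \<Rightarrow> 'a)
    \<Rightarrow> 'b set \<Rightarrow> ('f \<Rightarrow> 'b list \<Rightarrow> 'b) \<Rightarrow> ('a \<Rightarrow> 'b) \<Rightarrow> bool" where
  "isomorphism ar A IA B IB H \<longleftrightarrow> bij_betw H A B \<and>
     (\<forall>f xs. length xs = ar f \<and> set xs \<subseteq> A \<longrightarrow> H (IA f xs) = IB f (map H xs))"

definition justification :: "('f \<Rightarrow> nat) \<Rightarrow> 'f lterm \<Rightarrow> 'f lterm \<Rightarrow> bool" where
  "justification ar s t \<longleftrightarrow> wf_term ar s \<and> wf_term ar t \<and> vars t \<subseteq> vars s"

definition up :: "('f \<Rightarrow> nat) \<Rightarrow> 'a set \<Rightarrow> ('f \<Rightarrow> 'a list \<Rightarrow> 'a) \<Rightarrow> 'a \<Rightarrow> 'a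
    \<Rightarrow> ('f lterm \<times> 'f lterm) set" where
  "up ar A I a b = {(s, t). justification ar s t \<and>
     (\<exists>\<sigma>. (\<forall>x. \<sigma> x \<in> A) \<and> a = eval I \<sigma> s \<and> b = eval I \<sigma> t)}"

definition up2 :: "('f \<Rightarrow> nat) \<Rightarrow> 'a set \<Rightarrow> ('f \<Rightarrow> 'a list \<Rightarrow> 'a) \<Rightarrow> 'b set \<Rightarrow> ('f \<Rightarrow> 'b list \<Rightarrow> 'b)
    \<Rightarrow> 'a \<Rightarrow> 'a \<Rightarrow> 'b \<Rightarrow> 'b \<Rightarrow> ('f lterm \<times> 'f lterm) set" where
  "up2 ar A IA B IB a b c d = up ar A IA a b \<inter> up ar B IB c d"

definition trivial :: "('f \<Rightarrow> nat) \<Rightarrow> 'a set \<Rightarrow> ('f \<Rightarrow> 'a list \<Rightarrow> 'a) \<Rightarrow> 'b set \<Rightarrow> ('f \<Rightarrow> 'b list \<Rightarrow> 'b)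
    \<Rightarrow> ('f lterm \<times> 'f lterm) set" where
  "trivial ar A IA B IB = {J. \<forall>a'\<in>A. \<forall>b'\<in>A. \<forall>c'\<in>B. \<forall>d'\<in>B. J \<in> up2 ar A IA B IB a' b' c' d'}"

definition arrow_prop :: "('f \<Rightarrow> nat) \<Rightarrow> 'a set \<Rightarrow> ('f \<Rightarrow> 'a list \<Rightarrow> 'a) \<Rightarrow> 'b set \<Rightarrow> ('f \<Rightarrow> 'b list \<Rightarrow> 'b)
    \<Rightarrow> 'a \<Rightarrow> 'a \<Rightarrow> 'b \<Rightarrow> 'b \<Rightarrow> bool" where
  "arrow_prop ar A IA B IB a b c d \<longleftrightarrow>
     (let T = trivial ar A IA B IB; J = up2 ar A IA B IB a b in
       (up ar A IA a b \<union> up ar B IB c d \<subseteq> T) \<or>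
       (J c d - T \<noteq> {} \<and>
        (\<forall>d'\<in>B. J c d - T \<subseteq> J c d' - T \<longrightarrow> (J c d' - T \<noteq> {} \<and> J c d' - T \<subseteq> J c d - T))))"

definition analogy :: "('f \<Rightarrow> nat) \<Rightarrow> 'a set \<Rightarrow> ('f \<Rightarrow> 'a list \<Rightarrow> 'a) \<Rightarrow> 'b set \<Rightarrow> ('f \<Rightarrow> 'b list \<Rightarrow> 'b)
    \<Rightarrow> 'a \<Rightarrow> 'a \<Rightarrow> 'b \<Rightarrow> 'b \<Rightarrow> bool" where
  "analogy ar A IA B IB a b c d \<longleftrightarrow>
     arrow_prop ar A IA B IB a b c d \<and> arrow_prop ar A IA B IB b a d c \<and>
     arrow_prop ar B IB A IA c d a b \<and> arrow_prop ar B IB A IA d c b a"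

end

theory Submission
  imports Defs
begin

text \<open>The sets \<open>\<up>(a \<rightarrow> b)\<close> are invariant under isomorphisms: a homomorphism turns a witness
  \<open>\<sigma>\<close> of \<open>a = s(\<sigma>), b = t(\<sigma>)\<close> into the witness \<open>H \<circ> \<sigma>\<close> of \<open>H a = s(H \<circ> \<sigma>), H b = t(H \<circ> \<sigma>)\<close>,
  and the inverse isomorphism carries witnesses back. Everything else in the definition of
  \<open>a : b :: c : d\<close> is built from these sets and from quantifiers over the carriers, which the
  isomorphism maps onto each other.\<close>

definition homomorphism :: "('f \<Rightarrow> nat) \<Rightarrow> 'a set \<Rightarrow> ('f \<Rightarrow> 'a list \<Rightarrow> 'a)
    \<Rightarrow> 'b set \<Rightarrow> ('f \<Rightarrow> 'b list \<Rightarrow> 'b) \<Rightarrow> ('a \<Rightarrow> 'b) \<Rightarrow> bool" where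
  "homomorphism ar A IA B IB H \<longleftrightarrow> H ` A \<subseteq> B \<and>
     (\<forall>f xs. length xs = ar f \<and> set xs \<subseteq> A \<longrightarrow> H (IA f xs) = IB f (map H xs))"

lemma isomorphism_imp_homomorphism:
  "isomorphism ar A IA B IB H \<Longrightarrow> homomorphism ar A IA B IB H"
  unfolding isomorphism_def homomorphism_def bij_betw_def by blast

lemma isomorphism_image: "isomorphism ar A IA B IB H \<Longrightarrow> H ` A = B"
  unfolding isomorphism_def bij_betw_def by blast

lemma eval_in_carrier:
  assumes "algebra ar A I" and "wf_term ar s" and "\<forall>x. \<sigma> x \<in> A"
  shows "eval I \<sigma> s \<in> A"
  using assms(2) proof (induction s)
  case (Fun f ts)
  then have "set (map (eval I \<sigma>) ts) \<subseteq> A" by auto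
  then show ?case using assms(1) Fun.prems unfolding algebra_def by simp
qed (use assms(3) in simp)

lemma eval_homomorphism:
  assumes alg: "algebra ar A IA" and hom: "homomorphism ar A IA B IB H"
    and "wf_term ar s" and \<sigma>: "\<forall>x. \<sigma> x \<in> A"
  shows "H (eval IA \<sigma> s) = eval IB (H \<circ> \<sigma>) s"
  using assms(3) proof (induction s)
  case (Fun f ts)
  have args: "length (map (eval IA \<sigma>) ts) = ar f" "set (map (eval IA \<sigma>) ts) \<subseteq> A"
    using Fun.prems eval_in_carrier[OF alg _ \<sigma>] by auto
  have "H (IA f (map (eval IA \<sigma>) ts)) = IB f (map H (map (eval IA \<sigma>) ts))"
    using hom args unfolding homomorphism_def by blast
  also have "map H (map (eval IA \<sigma>) ts) = map (eval IB (H \<circ> \<sigma>)) ts"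
    using Fun by (auto simp: comp_def)
  finally show ?case by (simp only: eval.simps)
qed simp

lemma up_homomorphism_subset:
  assumes "algebra ar A IA" and hom: "homomorphism ar A IA B IB H"
  shows "up ar A IA a b \<subseteq> up ar B IB (H a) (H b)"
proof clarify
  fix s t
  assume "(s, t) \<in> up ar A IA a b"
  then obtain \<sigma> where j: "justification ar s t" and \<sigma>: "\<forall>x. \<sigma> x \<in> A"
    and "a = eval IA \<sigma> s" and "b = eval IA \<sigma> t"
    unfolding up_def by blast
  moreover have "wf_term ar s" "wf_term ar t" using j unfolding justification_def by auto
  ultimately have "H a = eval IB (H \<circ> \<sigma>) s" "H b = eval IB (H \<circ> \<sigma>) t"
    using eval_homomorphism[OF assms _ \<sigma>] by simp_all
  moreover have "\<forall>x. (H \<circ> \<sigma>) x \<in> B" using \<sigma> hom unfolding homomorphism_def by auto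
  ultimately show "(s, t) \<in> up ar B IB (H a) (H b)" unfolding up_def using j by blast
qed

lemma isomorphism_op_inv_into:
  assumes iso: "isomorphism ar A IA B IB H" and ys: "length ys = ar f" "set ys \<subseteq> B"
  shows "set (map (inv_into A H) ys) \<subseteq> A"
    and "IB f ys = H (IA f (map (inv_into A H) ys))"
proof -
  have img: "H ` A = B" using isomorphism_image[OF iso] .
  show xs: "set (map (inv_into A H) ys) \<subseteq> A"
    using ys img by (auto simp: inv_into_into)
  have "map H (map (inv_into A H) ys) = ys"
    using ys img by (auto simp: f_inv_into_f subset_iff intro: map_idI)
  then show "IB f ys = H (IA f (map (inv_into A H) ys))"
    using iso xs ys unfolding isomorphism_def by auto
qed

lemma algebra_isomorphic_image:
  assumes alg: "algebra ar A IA" and iso: "isomorphism ar A IA B IB H"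
  shows "algebra ar B IB"
  unfolding algebra_def
proof (intro allI impI)
  fix f ys
  assume "length ys = ar f \<and> set ys \<subseteq> B"
  then show "IB f ys \<in> B"
    using alg isomorphism_op_inv_into[OF iso] isomorphism_image[OF iso]
    unfolding algebra_def by auto
qed

lemma isomorphism_inv:
  assumes alg: "algebra ar A IA" and iso: "isomorphism ar A IA B IB H"
  shows "isomorphism ar B IB A IA (inv_into A H)"
  unfolding isomorphism_def
proof (intro conjI allI impI)
  have bij: "bij_betw H A B" using iso unfolding isomorphism_def by blast
  then show "bij_betw (inv_into A H) B A" by (rule bij_betw_inv_into)
  fix f ys
  assume "length ys = ar f \<and> set ys \<subseteq> B"
  moreover have "IA f (map (inv_into A H) ys) \<in> A" if "length ys = ar f" "set ys \<subseteq> B"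
    using alg isomorphism_op_inv_into(1)[OF iso that] that unfolding algebra_def by auto
  ultimately show "inv_into A H (IB f ys) = IA f (map (inv_into A H) ys)"
    using bij isomorphism_op_inv_into(2)[OF iso] unfolding bij_betw_def by simp
qed

lemma up_isomorphism:
  assumes alg: "algebra ar A IA" and iso: "isomorphism ar A IA B IB H"
    and "a \<in> A" and "b \<in> A"
  shows "up ar B IB (H a) (H b) = up ar A IA a b"
proof
  show "up ar A IA a b \<subseteq> up ar B IB (H a) (H b)"
    using up_homomorphism_subset[OF alg isomorphism_imp_homomorphism[OF iso]] .
  have "inv_into A H (H a) = a" "inv_into A H (H b) = b"
    using iso \<open>a \<in> A\<close> \<open>b \<in> A\<close> unfolding isomorphism_def bij_betw_def by auto
  moreover have "up ar B IB (H a) (H b) \<subseteq> up ar A IA (inv_into A H (H a)) (inv_into A H (H b))"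
    using up_homomorphism_subset[OF algebra_isomorphic_image[OF alg iso]
        isomorphism_imp_homomorphism[OF isomorphism_inv[OF alg iso]]] .
  ultimately show "up ar B IB (H a) (H b) \<subseteq> up ar A IA a b" by simp
qed

locale isomorphic_pairs =
  fixes ar :: "'f \<Rightarrow> nat"
    and A :: "'a set" and IA :: "'f \<Rightarrow> 'a list \<Rightarrow> 'a"
    and B :: "'b set" and IB :: "'f \<Rightarrow> 'b list \<Rightarrow> 'b"
    and A' :: "'c set" and IA' :: "'f \<Rightarrow> 'c list \<Rightarrow> 'c"
    and B' :: "'d set" and IB' :: "'f \<Rightarrow> 'd list \<Rightarrow> 'd"
    and H :: "'a \<Rightarrow> 'c" and G :: "'b \<Rightarrow> 'd"
  assumes alg_A: "algebra ar A IA" and iso_H: "isomorphism ar A IA A' IA' H"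
    and alg_B: "algebra ar B IB" and iso_G: "isomorphism ar B IB B' IB' G"
begin

lemma up2_eq:
  "\<lbrakk>a \<in> A; b \<in> A; c \<in> B; d \<in> B\<rbrakk> \<Longrightarrow>
    up2 ar A' IA' B' IB' (H a) (H b) (G c) (G d) = up2 ar A IA B IB a b c d"
  unfolding up2_def using up_isomorphism[OF alg_A iso_H] up_isomorphism[OF alg_B iso_G] by simp

lemma ball_A'_conv: "(\<forall>x\<in>A'. P x) \<longleftrightarrow> (\<forall>x\<in>A. P (H x))"
  unfolding isomorphism_image[OF iso_H, symmetric] by simp

lemma ball_B'_conv: "(\<forall>x\<in>B'. P x) \<longleftrightarrow> (\<forall>x\<in>B. P (G x))"
  unfolding isomorphism_image[OF iso_G, symmetric] by simp

lemma trivial_eq: "trivial ar A' IA' B' IB' = trivial ar A IA B IB"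
  unfolding trivial_def ball_A'_conv ball_B'_conv by (simp add: up2_eq cong: ball_cong)

lemma arrow_prop_eq:
  assumes "a \<in> A" "b \<in> A" "c \<in> B" "d \<in> B"
  shows "arrow_prop ar A' IA' B' IB' (H a) (H b) (G c) (G d) = arrow_prop ar A IA B IB a b c d"
  unfolding arrow_prop_def Let_def trivial_eq ball_B'_conv
  by (simp add: assms up2_eq up_isomorphism[OF alg_A iso_H] up_isomorphism[OF alg_B iso_G])

end

lemma analogy_isomorphism:
  assumes "algebra ar A IA" "isomorphism ar A IA A' IA' H"
    and "algebra ar B IB" "isomorphism ar B IB B' IB' G"
    and "a \<in> A" "b \<in> A" "c \<in> B" "d \<in> B"
  shows "analogy ar A' IA' B' IB' (H a) (H b) (G c) (G d) = analogy ar A IA B IB a b c d"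
proof -
  interpret AB: isomorphic_pairs ar A IA B IB A' IA' B' IB' H G
    using assms(1-4) by unfold_locales
  interpret BA: isomorphic_pairs ar B IB A IA B' IB' A' IA' G H
    using assms(1-4) by unfold_locales
  show ?thesis
    unfolding analogy_def using assms(5-8) by (simp add: AB.arrow_prop_eq BA.arrow_prop_eq)
qed

theorem mainTheorem3:
  fixes ar :: "'f \<Rightarrow> nat"
    and A :: "'a set" and IA :: "'f \<Rightarrow> 'a list \<Rightarrow> 'a"
    and B :: "'b set" and IB :: "'f \<Rightarrow> 'b list \<Rightarrow> 'b"
    and H :: "'a \<Rightarrow> 'b"
  assumes "algebra ar A IA" and "algebra ar B IB"
    and "isomorphism ar A IA B IB H"
  shows "\<forall>a\<in>A. \<forall>b\<in>A. \<forall>c\<in>A. \<forall>d\<in>A.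
           analogy ar A IA A IA a b c d \<longleftrightarrow> analogy ar B IB B IB (H a) (H b) (H c) (H d)"
  using analogy_isomorphism[OF assms(1,3) assms(1,3)] by simp

end
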